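(* Let $\gamma:[0,1]\to\mathbb{R}$ be of class $C^3$ on $(0,1]$ and $C^2$ on $[0,1]$, with $\gamma(0)=\gamma'(0)=\gamma''(0)=0$, $\gamma''$ nonnegative and strictly increasing on $[0,1]$, and such that $b=\lim_{t\to0+}\gamma''(t)/(t\gamma'''(t))$ exists in $[0,\infty)$. Let $h(t)=t^2\gamma''(t)$ for $t\in[0,1]$. Then: (i) if $0\le s\le\gamma(1)$, then $s\le h(1)$ and $h^{-1}(s)\le\gamma^{-1}(s)$; (ii) if $0\le s\le h(1/3)$, then $s\le\gamma(1)$ and $\gamma^{-1}(s)\le 3h^{-1}(s)$.
   Context: $h^{-1}$ and $\gamma^{-1}$ denote the inverses of the increasing functions $h$ and $\gamma$ on $[0,1]$. *)

theory Defs
  imports Complex_Main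
begin

end

theory Submission
  imports Defs "HOL-Analysis.Analysis"
begin

text \<open>Since \<open>\<gamma>''\<close> increases, the mean value theorem gives \<open>\<gamma>'(t) \<le> t \<gamma>''(t)\<close> and
  \<open>\<gamma>(t) \<le> t \<gamma>'(t)\<close>, hence \<open>\<gamma> \<le> h\<close>. In the other direction
  \<open>\<gamma>(3t) \<ge> \<gamma>(3t) - \<gamma>(2t) \<ge> t \<gamma>'(2t) \<ge> t (\<gamma>'(2t) - \<gamma>'(t)) \<ge> t\<^sup>2 \<gamma>''(t) = h(t)\<close>.
  As \<open>\<gamma>\<close> and \<open>h\<close> are continuous and strictly increasing, these pointwise comparisons
  turn into the comparisons of the inverses.\<close>

lemma real_mvt_within:
  fixes f f' :: "real \<Rightarrow> real"
  assumes "a < b" "{a..b} \<subseteq> S"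
    and deriv: "\<And>x. x \<in> {a..b} \<Longrightarrow> (f has_real_derivative f' x) (at x within S)"
  obtains z where "a < z" "z < b" "f b - f a = f' z * (b - a)"
proof -
  have "\<exists>z\<in>{a<..<b}. f b - f a = (*) (f' z) (b - a)"
  proof (rule mvt_simple[OF \<open>a < b\<close>])
    fix x assume "a \<le> x" "x \<le> b"
    with assms have "(f has_real_derivative f' x) (at x within {a..b})"
      by (auto intro: has_field_derivative_subset)
    then show "(f has_derivative (*) (f' x)) (at x within {a..b})"
      by (rule has_field_derivative_imp_has_derivative)
  qed
  with that show ?thesis by auto
qed

lemma increment_bounds_mono_deriv:
  fixes f f' :: "real \<Rightarrow> real"
  assumes "a \<le> b" "{a..b} \<subseteq> S" "mono_on S f'"
    and deriv: "\<And>x. x \<in> {a..b} \<Longrightarrow> (f has_real_derivative f' x) (at x within S)"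
  shows "f' a * (b - a) \<le> f b - f a" and "f b - f a \<le> f' b * (b - a)"
proof -
  have "f' a * (b - a) \<le> f b - f a \<and> f b - f a \<le> f' b * (b - a)"
  proof (cases "a = b")
    case False
    with assms obtain z where z: "a < z" "z < b" "f b - f a = f' z * (b - a)"
      by (metis order_less_le real_mvt_within)
    with assms have "f' a \<le> f' z" "f' z \<le> f' b"
      by (auto intro!: mono_onD[of S f'])
    with z \<open>a \<le> b\<close> show ?thesis
      by (auto intro: mult_right_mono)
  qed simp
  then show "f' a * (b - a) \<le> f b - f a" and "f b - f a \<le> f' b * (b - a)"
    by auto
qed

lemma increment_gt_strict_mono_deriv:
  fixes f f' :: "real \<Rightarrow> real"
  assumes "a < b" "{a..b} \<subseteq> S" "strict_mono_on S f'"
    and deriv: "\<And>x. x \<in> {a..b} \<Longrightarrow> (f has_real_derivative f' x) (at x within S)"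
  shows "f' a * (b - a) < f b - f a"
proof -
  from assms obtain z where z: "a < z" "z < b" "f b - f a = f' z * (b - a)"
    by (metis real_mvt_within)
  with assms have "f' a < f' z"
    by (auto intro!: strict_mono_onD[of S f'])
  with z \<open>a < b\<close> show ?thesis by simp
qed

lemma the_inv_into_continuous_strict_mono:
  fixes f :: "real \<Rightarrow> real"
  assumes "continuous_on {a..b} f" "strict_mono_on {a..b} f" "a \<le> b" "f a \<le> s" "s \<le> f b"
  shows "the_inv_into {a..b} f s \<in> {a..b}" and "f (the_inv_into {a..b} f s) = s"
proof -
  from assms obtain x where x: "x \<in> {a..b}" "f x = s"
    using IVT'[of f a s b] by auto
  have inj: "inj_on f {a..b}"
    using assms(2) by (rule strict_mono_on_imp_inj_on)
  from x show "the_inv_into {a..b} f s \<in> {a..b}"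
    using the_inv_into_f_eq[OF inj] by auto
  from x show "f (the_inv_into {a..b} f s) = s"
    using the_inv_into_f_eq[OF inj] by auto
qed

locale convex_flat_at_zero =
  fixes \<gamma> g1 g2 h :: "real \<Rightarrow> real"
  assumes gamma_deriv: "\<And>t. t \<in> {0..1} \<Longrightarrow> (\<gamma> has_real_derivative g1 t) (at t within {0..1})"
    and g1_deriv: "\<And>t. t \<in> {0..1} \<Longrightarrow> (g1 has_real_derivative g2 t) (at t within {0..1})"
    and g2_continuous: "continuous_on {0..1} g2"
    and gamma_0: "\<gamma> 0 = 0" and g1_0: "g1 0 = 0" and g2_0: "g2 0 = 0"
    and g2_strict_mono: "strict_mono_on {0..1} g2"
    and h_eq: "\<And>t. h t = t\<^sup>2 * g2 t"
begin

lemma g2_nonneg: "t \<in> {0..1} \<Longrightarrow> 0 \<le> g2 t"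
  using strict_mono_on_leD[OF g2_strict_mono, of 0 t] g2_0 by auto

lemma g1_strict_mono: "strict_mono_on {0..1} g1"
proof (rule strict_mono_onI)
  fix x y :: real assume xy: "x \<in> {0..1}" "y \<in> {0..1}" "x < y"
  then have "g2 x * (y - x) < g1 y - g1 x"
    by (intro increment_gt_strict_mono_deriv[where S = "{0..1}"]
        g2_strict_mono g1_deriv) auto
  moreover have "0 \<le> g2 x * (y - x)"
    using g2_nonneg xy by simp
  ultimately show "g1 x < g1 y" by simp
qed

lemma g1_nonneg: "t \<in> {0..1} \<Longrightarrow> 0 \<le> g1 t"
  using strict_mono_on_leD[OF g1_strict_mono, of 0 t] g1_0 by auto

lemma gamma_strict_mono: "strict_mono_on {0..1} \<gamma>"
proof (rule strict_mono_onI)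
  fix x y :: real assume xy: "x \<in> {0..1}" "y \<in> {0..1}" "x < y"
  then have "g1 x * (y - x) < \<gamma> y - \<gamma> x"
    by (intro increment_gt_strict_mono_deriv[where S = "{0..1}"]
        g1_strict_mono gamma_deriv) auto
  moreover have "0 \<le> g1 x * (y - x)"
    using g1_nonneg xy by simp
  ultimately show "\<gamma> x < \<gamma> y" by simp
qed

lemma gamma_nonneg: "t \<in> {0..1} \<Longrightarrow> 0 \<le> \<gamma> t"
  using strict_mono_on_leD[OF gamma_strict_mono, of 0 t] gamma_0 by auto

lemma h_strict_mono: "strict_mono_on {0..1} h"
proof (rule strict_mono_onI)
  fix x y :: real assume xy: "x \<in> {0..1}" "y \<in> {0..1}" "x < y"
  have "x\<^sup>2 * g2 x \<le> y\<^sup>2 * g2 x"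
    using xy g2_nonneg[of x] by (intro mult_right_mono power_mono) auto
  also have "\<dots> < y\<^sup>2 * g2 y"
    using xy strict_mono_onD[OF g2_strict_mono] by auto
  finally show "h x < h y" by (simp add: h_eq)
qed

lemma gamma_continuous: "continuous_on {0..1} \<gamma>"
  using gamma_deriv by (rule DERIV_continuous_on)

lemma h_continuous: "continuous_on {0..1} h"
  unfolding h_eq by (intro continuous_intros g2_continuous)

lemma gamma_le_h:
  assumes t: "t \<in> {0..1}"
  shows "\<gamma> t \<le> h t"
proof -
  have "\<gamma> t = \<gamma> t - \<gamma> 0"
    by (simp add: gamma_0)
  also have "\<dots> \<le> g1 t * (t - 0)"
    using t by (intro increment_bounds_mono_deriv(2)[where S = "{0..1}"]
        strict_mono_on_imp_mono_on[OF g1_strict_mono] gamma_deriv) auto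
  also have "\<dots> = (g1 t - g1 0) * t"
    by (simp add: g1_0)
  also have "\<dots> \<le> g2 t * (t - 0) * t"
    using t by (intro mult_right_mono increment_bounds_mono_deriv(2)[where S = "{0..1}"]
        strict_mono_on_imp_mono_on[OF g2_strict_mono] g1_deriv) auto
  also have "\<dots> = h t"
    by (simp add: h_eq power2_eq_square)
  finally show ?thesis .
qed

lemma h_le_gamma_triple:
  assumes t: "t \<in> {0..1/3}"
  shows "h t \<le> \<gamma> (3 * t)"
proof -
  have "h t = t * (g2 t * (2 * t - t))"
    by (simp add: h_eq power2_eq_square)
  also have "\<dots> \<le> t * (g1 (2 * t) - g1 t)"
    using t by (intro mult_left_mono increment_bounds_mono_deriv(1)[where S = "{0..1}"]
        strict_mono_on_imp_mono_on[OF g2_strict_mono] g1_deriv) auto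
  also have "\<dots> \<le> g1 (2 * t) * (3 * t - 2 * t)"
    using t g1_nonneg[of t] by (simp add: algebra_simps)
  also have "\<dots> \<le> \<gamma> (3 * t) - \<gamma> (2 * t)"
    using t by (intro increment_bounds_mono_deriv(1)[where S = "{0..1}"]
        strict_mono_on_imp_mono_on[OF g1_strict_mono] gamma_deriv) auto
  also have "\<dots> \<le> \<gamma> (3 * t)"
    using t gamma_nonneg[of "2 * t"] by simp
  finally show ?thesis .
qed

lemma inverse_h_le_inverse_gamma:
  assumes s: "0 \<le> s" "s \<le> \<gamma> 1"
  shows "s \<le> h 1" and "the_inv_into {0..1} h s \<le> the_inv_into {0..1} \<gamma> s"
proof -
  show "s \<le> h 1"
    using s gamma_le_h[of 1] by simp
  then have t: "the_inv_into {0..1} h s \<in> {0..1}" "h (the_inv_into {0..1} h s) = s"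
    using the_inv_into_continuous_strict_mono[OF h_continuous h_strict_mono] s
    by (auto simp: h_eq)
  have u: "the_inv_into {0..1} \<gamma> s \<in> {0..1}" "\<gamma> (the_inv_into {0..1} \<gamma> s) = s"
    using the_inv_into_continuous_strict_mono[OF gamma_continuous gamma_strict_mono] s gamma_0
    by auto
  have "h (the_inv_into {0..1} h s) \<le> h (the_inv_into {0..1} \<gamma> s)"
    using t u gamma_le_h by metis
  with t u show "the_inv_into {0..1} h s \<le> the_inv_into {0..1} \<gamma> s"
    using strict_mono_on_less_eq[OF h_strict_mono] by blast
qed

lemma inverse_gamma_le_triple_inverse_h:
  assumes s: "0 \<le> s" "s \<le> h (1/3)"
  shows "s \<le> \<gamma> 1" and "the_inv_into {0..1} \<gamma> s \<le> 3 * the_inv_into {0..1} h s"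
proof -
  show "s \<le> \<gamma> 1"
    using s h_le_gamma_triple[of "1/3"] by simp
  then have u: "the_inv_into {0..1} \<gamma> s \<in> {0..1}" "\<gamma> (the_inv_into {0..1} \<gamma> s) = s"
    using the_inv_into_continuous_strict_mono[OF gamma_continuous gamma_strict_mono] s gamma_0
    by auto
  have "h (1/3) \<le> h 1"
    using strict_mono_on_leD[OF h_strict_mono] by simp
  then have t: "the_inv_into {0..1} h s \<in> {0..1}" "h (the_inv_into {0..1} h s) = s"
    using the_inv_into_continuous_strict_mono[OF h_continuous h_strict_mono] s
    by (auto simp: h_eq)
  with s have "the_inv_into {0..1} h s \<le> 1/3"
    using strict_mono_on_less_eq[OF h_strict_mono, of "the_inv_into {0..1} h s" "1/3"] by simp
  with t have "s \<le> \<gamma> (3 * the_inv_into {0..1} h s)"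
    using h_le_gamma_triple by fastforce
  with t u \<open>the_inv_into {0..1} h s \<le> 1/3\<close>
  show "the_inv_into {0..1} \<gamma> s \<le> 3 * the_inv_into {0..1} h s"
    using strict_mono_on_less_eq[OF gamma_strict_mono,
        of "the_inv_into {0..1} \<gamma> s" "3 * the_inv_into {0..1} h s"] by simp
qed

end

theorem lemma4p3:
  fixes \<gamma> g1 g2 g3 :: "real \<Rightarrow> real" and b :: real
  assumes d1: "\<And>t. t \<in> {0..1} \<Longrightarrow> (\<gamma> has_real_derivative g1 t) (at t within {0..1})"
    and d2: "\<And>t. t \<in> {0..1} \<Longrightarrow> (g1 has_real_derivative g2 t) (at t within {0..1})"
    and c2: "continuous_on {0..1} g2"
    and d3: "\<And>t. t \<in> {0<..1} \<Longrightarrow> (g2 has_real_derivative g3 t) (at t within {0<..1})"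
    and c3: "continuous_on {0<..1} g3"
    and z0: "\<gamma> 0 = 0" and z1: "g1 0 = 0" and z2: "g2 0 = 0"
    and nonneg: "\<And>t. t \<in> {0..1} \<Longrightarrow> g2 t \<ge> 0"
    and mono: "strict_mono_on {0..1} g2"
    and b_nonneg: "b \<ge> 0"
    and lim: "((\<lambda>t. g2 t / (t * g3 t)) \<longlongrightarrow> b) (at_right 0)"
  defines "h \<equiv> (\<lambda>t. t\<^sup>2 * g2 t)"
  shows "(\<forall>s. 0 \<le> s \<and> s \<le> \<gamma> 1 \<longrightarrow>
            s \<le> h 1 \<and> the_inv_into {0..1} h s \<le> the_inv_into {0..1} \<gamma> s)
       \<and> (\<forall>s. 0 \<le> s \<and> s \<le> h (1/3) \<longrightarrow>
            s \<le> \<gamma> 1 \<and> the_inv_into {0..1} \<gamma> s \<le> 3 * the_inv_into {0..1} h s)"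
proof -
  interpret convex_flat_at_zero \<gamma> g1 g2 h
    by unfold_locales (use d1 d2 c2 z0 z1 z2 mono in \<open>simp_all add: h_def\<close>)
  show ?thesis
    using inverse_h_le_inverse_gamma inverse_gamma_le_triple_inverse_h by blast
qed

end
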